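(* Consider the Random Majority Model (RMM) on the cycle $C_n$ started from an initial coloring with $b_0=pn$ blue nodes, for some $0\le p\le 1$. Then $\mathbb{E}[b_t]=pn$ for every $t\in\mathbb{N}$, where $b_t$ is the number of blue nodes after round $t$.
   Context: A coloring is a map from the nodes to $\{b,w\}$. In RMM, all nodes update simultaneously in each round: a node adopts the color strictly more frequent among its neighbors in the previous round, and in case of a tie chooses blue or white independently and uniformly at random. *)

theory Defs
  imports "HOL-Probability.Probability"
begin

datatype color = Blue | White

text \<open>Cycle C_n on nodes 0..n-1; node i has neighbours (i+1) mod n and (i+n-1) mod n.
  A coloring is a map nat => color (only values on {0..<n} matter).\<close>

definition cyc_nbrs :: "nat \<Rightarrow> nat \<Rightarrow> nat list" where
  "cyc_nbrs n i = [(i + n - 1) mod n, (i + 1) mod n]"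

definition node_update :: "nat \<Rightarrow> (nat \<Rightarrow> color) \<Rightarrow> nat \<Rightarrow> color pmf" where
  "node_update n c i =
     (let nb = length (filter (\<lambda>j. c j = Blue) (cyc_nbrs n i));
          nw = length (filter (\<lambda>j. c j = White) (cyc_nbrs n i))
      in if nb > nw then return_pmf Blue
         else if nw > nb then return_pmf White
         else pmf_of_set {Blue, White})"

definition rmm_step :: "nat \<Rightarrow> (nat \<Rightarrow> color) \<Rightarrow> (nat \<Rightarrow> color) pmf" where
  "rmm_step n c = Pi_pmf {..<n} White (node_update n c)"

fun rmm :: "nat \<Rightarrow> (nat \<Rightarrow> color) \<Rightarrow> nat \<Rightarrow> (nat \<Rightarrow> color) pmf" where
  "rmm n c0 0 = return_pmf c0"
| "rmm n c0 (Suc t) = bind_pmf (rmm n c0 t) (rmm_step n)"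

definition blue_count :: "nat \<Rightarrow> (nat \<Rightarrow> color) \<Rightarrow> nat" where
  "blue_count n c = card {i. i < n \<and> c i = Blue}"

end

theory Submission
  imports Defs
begin

text \<open>A node becomes blue with probability equal to the fraction of blue nodes among its two
  neighbours (a tie means exactly one blue neighbour, broken by a fair coin). Summing over the
  cycle, every node is counted once as a left and once as a right neighbour, so the expected
  number of blue nodes after a round equals the current number: \<open>b\<^sub>t\<close> is a martingale, and
  \<open>E[b\<^sub>t] = b\<^sub>0\<close> follows by induction on \<open>t\<close>.\<close>

lemma sum_rotate_one_mod:
  fixes g :: "nat \<Rightarrow> 'a::comm_monoid_add"
  shows "(\<Sum>i<n. g ((i + 1) mod n)) = (\<Sum>i<n. g i)"
proof (cases n)
  case (Suc m)
  have "(\<Sum>i<Suc m. g ((i + 1) mod Suc m)) = (\<Sum>i<m. g (Suc i)) + g 0"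
    by (simp add: sum.lessThan_Suc)
  also have "\<dots> = (\<Sum>i<Suc m. g i)"
    by (subst sum.lessThan_Suc_shift) (rule add.commute)
  finally show ?thesis
    using Suc by simp
qed simp

lemma sum_rotate_mod:
  fixes g :: "nat \<Rightarrow> 'a::comm_monoid_add"
  shows "(\<Sum>i<n. g ((i + k) mod n)) = (\<Sum>i<n. g i)"
proof (induction k)
  case (Suc k)
  have "(\<Sum>i<n. g ((i + Suc k) mod n)) = (\<Sum>i<n. g (((i + 1) mod n + k) mod n))"
    by (simp add: mod_add_left_eq)
  also have "\<dots> = (\<Sum>i<n. g ((i + k) mod n))"
    by (rule sum_rotate_one_mod)
  finally show ?case
    using Suc.IH by simp
qed (simp add: mod_less)

lemma blue_count_eq_sum: "real (blue_count n c) = (\<Sum>i<n. of_bool (c i = Blue))"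
  by (simp add: blue_count_def Int_def)

lemma expectation_blue_count:
  "measure_pmf.expectation M (\<lambda>c. real (blue_count n c))
     = (\<Sum>i<n. measure_pmf.prob M {c. c i = Blue})"
proof -
  have "measure_pmf.expectation M (\<lambda>c. real (blue_count n c))
      = measure_pmf.expectation M (\<lambda>c. \<Sum>i<n. indicator {c. c i = Blue} c)"
    by (simp add: blue_count_eq_sum indicator_def)
  also have "\<dots> = (\<Sum>i<n. measure_pmf.expectation M (indicator {c. c i = Blue}))"
    by (rule Bochner_Integration.integral_sum,
        rule measure_pmf.integrable_const_bound[where B = 1]) (auto simp: indicator_def)
  finally show ?thesis
    by simp
qed

lemma prob_rmm_step_Blue:
  assumes "i < n"
  shows "measure_pmf.prob (rmm_step n c) {x. x i = Blue} = pmf (node_update n c i) Blue"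
proof -
  have "measure_pmf.prob (rmm_step n c) {x. x i = Blue}
      = measure_pmf.prob (map_pmf (\<lambda>x. x i) (rmm_step n c)) {Blue}"
    by (simp add: vimage_def)
  also have "map_pmf (\<lambda>x. x i) (rmm_step n c) = node_update n c i"
    using assms by (simp add: rmm_step_def Pi_pmf_component)
  finally show ?thesis
    by (simp add: measure_pmf_single)
qed

lemma pmf_node_update_Blue:
  "pmf (node_update n c i) Blue
     = (of_bool (c ((i + n - 1) mod n) = Blue) + of_bool (c ((i + 1) mod n) = Blue)) / 2"
  unfolding node_update_def cyc_nbrs_def
  by (cases "c ((i + n - 1) mod n)"; cases "c ((i + 1) mod n)")
     (auto simp: pmf_of_set pmf_return)

lemma expectation_blue_count_rmm_step:
  "measure_pmf.expectation (rmm_step n c) (\<lambda>x. real (blue_count n x)) = real (blue_count n c)"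
proof (cases "n = 0")
  case False
  let ?blue = "\<lambda>j. of_bool (c j = Blue) :: real"
  have left_nbrs: "(\<Sum>i<n. ?blue ((i + n - 1) mod n)) = real (blue_count n c)"
    using sum_rotate_mod[of ?blue "n - 1" n] False by (simp add: blue_count_eq_sum)
  have right_nbrs: "(\<Sum>i<n. ?blue ((i + 1) mod n)) = real (blue_count n c)"
    using sum_rotate_mod[of ?blue 1 n] by (simp add: blue_count_eq_sum)
  have "measure_pmf.expectation (rmm_step n c) (\<lambda>x. real (blue_count n x))
      = (\<Sum>i<n. (?blue ((i + n - 1) mod n) + ?blue ((i + 1) mod n)) / 2)"
    by (simp add: expectation_blue_count prob_rmm_step_Blue pmf_node_update_Blue)
  also have "\<dots> = ((\<Sum>i<n. ?blue ((i + n - 1) mod n)) + (\<Sum>i<n. ?blue ((i + 1) mod n))) / 2"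
    by (simp add: sum.distrib flip: sum_divide_distrib)
  also have "\<dots> = real (blue_count n c)"
    by (simp only: left_nbrs right_nbrs) simp
  finally show ?thesis .
qed (simp add: blue_count_def)

lemma expectation_bind_pmf:
  fixes f :: "'b \<Rightarrow> real"
  assumes "\<And>x. \<bar>f x\<bar> \<le> B"
  shows "measure_pmf.expectation (bind_pmf M N) f
           = measure_pmf.expectation M (\<lambda>x. measure_pmf.expectation (N x) f)"
  unfolding measure_pmf_bind
  using assms measurable_measure_pmf[of N]
  by (intro integral_bind[where K = "count_space UNIV" and B = B and B' = 1])
     (simp_all add: measurable_cong_sets)

lemma expectation_blue_count_rmm:
  "measure_pmf.expectation (rmm n c0 t) (\<lambda>c. real (blue_count n c)) = real (blue_count n c0)"
proof (induction t)
  case (Suc t)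
  have bounded: "\<bar>real (blue_count n c)\<bar> \<le> real n" for c
    unfolding blue_count_def using card_mono[of "{..<n}" "{i. i < n \<and> c i = Blue}"] by auto
  show ?case
    using Suc
    by (simp add: expectation_bind_pmf[OF bounded] expectation_blue_count_rmm_step)
qed simp

theorem theorem4p2:
  fixes n :: nat and p :: real and c0 :: "nat \<Rightarrow> color" and t :: nat
  assumes "n \<ge> 3" and "0 \<le> p" and "p \<le> 1"
    and "real (blue_count n c0) = p * real n"
  shows "measure_pmf.expectation (rmm n c0 t) (\<lambda>c. real (blue_count n c)) = p * real n"
  using assms(4) by (simp add: expectation_blue_count_rmm)

end
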